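(* For all $k,m\in\mathbb{N}$ with $k<m$, the metric space $([\mathbb{N}]^k,d^{(k)}_{\mathrm{I}})$ embeds isometrically into $([\mathbb{N}]^m,d^{(m)}_{\mathrm{I}})$.
   Context: For $k\in\mathbb{N}$, $[\mathbb{N}]^k$ is the set of subsets of $\mathbb{N}$ of cardinality $k$, written $\{a_1<\dots<a_k\}$. Kalton's interlacing graph on $[\mathbb{N}]^k$: $A=\{a_1<\dots<a_k\}\ne B=\{b_1<\dots<b_k\}$ are adjacent iff either $a_i\le b_i\le a_{i+1}$ for $1\le i<k$ and $a_k\le b_k$, or $b_i\le a_i\le b_{i+1}$ for $1\le i<k$ and $b_k\le a_k$. $d^{(k)}_{\mathrm{I}}$ is its shortest-path metric. *)

theory Defs
  imports Main "HOL-Library.Extended_Nat"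
begin

definition ksets :: "nat \<Rightarrow> nat set set" where
  "ksets k = {A. finite A \<and> card A = k}"

definition elt :: "nat set \<Rightarrow> nat \<Rightarrow> nat" where
  "elt A i = sorted_list_of_set A ! i"

text \<open>One-sided interlacing: a_i \<le> b_i \<le> a_{i+1} for 1 \<le> i < k and a_k \<le> b_k
  (here with 0-based indices).\<close>
definition interlaces :: "nat \<Rightarrow> nat set \<Rightarrow> nat set \<Rightarrow> bool" where
  "interlaces k A B \<longleftrightarrow>
     (\<forall>i. i + 1 < k \<longrightarrow> elt A i \<le> elt B i \<and> elt B i \<le> elt A (i + 1)) \<and>
     (0 < k \<longrightarrow> elt A (k - 1) \<le> elt B (k - 1))"

definition interlacing_adj :: "nat \<Rightarrow> nat set \<Rightarrow> nat set \<Rightarrow> bool" where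
  "interlacing_adj k A B \<longleftrightarrow>
     A \<in> ksets k \<and> B \<in> ksets k \<and> A \<noteq> B \<and> (interlaces k A B \<or> interlaces k B A)"

text \<open>Shortest-path metric (value \<infinity> if no path exists).\<close>
definition dI :: "nat \<Rightarrow> nat set \<Rightarrow> nat set \<Rightarrow> enat" where
  "dI k A B = (INF n \<in> {n. (interlacing_adj k ^^ n) A B}. enat n)"

end

theory Submission
  imports Defs
begin

text \<open>Pad a k-set A with the j smallest naturals and shift A up by j: the resulting
  (j + k)-set agrees with every other padded set in its first j entries, so interlacing of
  padded sets is exactly interlacing of the original sets, and padding maps edges to edges.
  Conversely, dropping the j smallest entries and shifting down maps every edge of the
  (j + k)-graph to an edge or a loop of the k-graph, and it inverts padding. Both maps are
  therefore 1-Lipschitz for the path metrics, which forces padding to be an isometry.\<close>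

lemma sorted_list_of_set_strict_sorted:
  "sorted_wrt (<) xs \<Longrightarrow> sorted_list_of_set (set xs) = xs"
  by (simp add: strict_sorted_iff sorted_list_of_set.idem_if_sorted_distinct)

definition pad :: "nat \<Rightarrow> nat set \<Rightarrow> nat set" where
  "pad j A = {..<j} \<union> (+) j ` A"

definition unpad :: "nat \<Rightarrow> nat set \<Rightarrow> nat set" where
  "unpad j C = (\<lambda>x. x - j) ` set (drop j (sorted_list_of_set C))"

lemma sorted_list_of_set_pad:
  assumes "finite A"
  shows "sorted_list_of_set (pad j A) = [0..<j] @ map ((+) j) (sorted_list_of_set A)"
proof -
  have "pad j A = set ([0..<j] @ map ((+) j) (sorted_list_of_set A))"
    using assms by (auto simp: pad_def)
  moreover have "sorted_wrt (<) ([0..<j] @ map ((+) j) (sorted_list_of_set A))"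
    by (auto simp: sorted_wrt_append sorted_wrt_map)
  ultimately show ?thesis
    by (metis sorted_list_of_set_strict_sorted)
qed

lemma sorted_list_of_set_unpad:
  assumes "finite C"
  shows "sorted_list_of_set (unpad j C) = map (\<lambda>x. x - j) (drop j (sorted_list_of_set C))"
proof -
  let ?xs = "drop j (sorted_list_of_set C)"
  have strict: "sorted_wrt (<) ?xs"
    by simp
  have large: "j \<le> x" if "x \<in> set ?xs" for x
  proof -
    from that obtain i where "i < length ?xs" "x = ?xs ! i"
      by (auto simp: in_set_conv_nth)
    then show ?thesis
      using sorted_wrt_less_idx[of "sorted_list_of_set C" "j + i"] by force
  qed
  have "sorted_wrt (<) (map (\<lambda>x. x - j) ?xs)"
    unfolding sorted_wrt_map using strict
    by (rule sorted_wrt_mono_rel[rotated]) (simp add: large diff_less_mono)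
  then show ?thesis
    unfolding unpad_def by (metis sorted_list_of_set_strict_sorted set_map)
qed

lemma card_pad: "finite A \<Longrightarrow> card (pad j A) = j + card A"
  by (metis length_append length_map length_sorted_list_of_set length_upt
      minus_nat.diff_0 sorted_list_of_set_pad)

lemma card_unpad: "finite C \<Longrightarrow> card (unpad j C) = card C - j"
  by (metis length_drop length_map length_sorted_list_of_set sorted_list_of_set_unpad)

lemma elt_pad:
  "finite A \<Longrightarrow> i < j + card A \<Longrightarrow> elt (pad j A) i = (if i < j then i else j + elt A (i - j))"
  by (simp add: elt_def sorted_list_of_set_pad nth_append)

lemma elt_unpad:
  "finite C \<Longrightarrow> j + i < card C \<Longrightarrow> elt (unpad j C) i = elt C (j + i) - j"
  using nth_drop[of j "sorted_list_of_set C" i] by (simp add: elt_def sorted_list_of_set_unpad)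

lemma unpad_pad: "finite A \<Longrightarrow> unpad j (pad j A) = A"
  by (simp add: unpad_def sorted_list_of_set_pad image_image)

lemma pad_ksets: "A \<in> ksets k \<Longrightarrow> pad j A \<in> ksets (j + k)"
  using card_pad[of A j] by (simp add: ksets_def pad_def)

lemma unpad_ksets: "C \<in> ksets (j + k) \<Longrightarrow> unpad j C \<in> ksets k"
  using card_unpad[of C j] by (simp add: ksets_def unpad_def)

lemma interlaces_pad:
  assumes A: "A \<in> ksets k" and B: "B \<in> ksets k" and AB: "interlaces k A B"
  shows "interlaces (j + k) (pad j A) (pad j B)"
proof -
  have eltA: "elt (pad j A) i = (if i < j then i else j + elt A (i - j))" if "i < j + k" for i
    using A that by (simp add: ksets_def elt_pad)
  have eltB: "elt (pad j B) i = (if i < j then i else j + elt B (i - j))" if "i < j + k" for i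
    using B that by (simp add: ksets_def elt_pad)
  have inner: "elt (pad j A) i \<le> elt (pad j B) i \<and> elt (pad j B) i \<le> elt (pad j A) (i + 1)"
    if i: "i + 1 < j + k" for i
  proof -
    consider "i + 1 < j" | "i + 1 = j" | "j \<le> i" by linarith
    then show ?thesis
    proof cases
      case 3
      then have "i - j + 1 < k" "i + 1 - j = i - j + 1" using i by auto
      with AB have "elt A (i - j) \<le> elt B (i - j) \<and> elt B (i - j) \<le> elt A (i + 1 - j)"
        by (simp add: interlaces_def)
      with 3 i show ?thesis by (simp add: eltA eltB)
    qed (use i in \<open>simp_all add: eltA eltB\<close>)
  qed
  have last: "elt (pad j A) (j + k - 1) \<le> elt (pad j B) (j + k - 1)" if "0 < j + k"
  proof (cases "k = 0")
    case False
    with AB have "elt A (k - 1) \<le> elt B (k - 1)" by (simp add: interlaces_def)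
    with False show ?thesis by (simp add: eltA eltB)
  qed (use that in \<open>simp add: eltA eltB\<close>)
  from inner last show ?thesis by (simp add: interlaces_def)
qed

lemma interlaces_unpad:
  assumes C: "C \<in> ksets (j + k)" and D: "D \<in> ksets (j + k)" and CD: "interlaces (j + k) C D"
  shows "interlaces k (unpad j C) (unpad j D)"
proof -
  have eltC: "elt (unpad j C) i = elt C (j + i) - j" if "i < k" for i
    using C that by (simp add: ksets_def elt_unpad)
  have eltD: "elt (unpad j D) i = elt D (j + i) - j" if "i < k" for i
    using D that by (simp add: ksets_def elt_unpad)
  have "elt C (j + i) \<le> elt D (j + i) \<and> elt D (j + i) \<le> elt C (j + i + 1)" if "i + 1 < k" for i
    using CD that unfolding interlaces_def by (metis add.assoc nat_add_left_cancel_less)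
  moreover have "elt C (j + (k - 1)) \<le> elt D (j + (k - 1))" if "0 < k"
    using CD that unfolding interlaces_def by simp
  ultimately show ?thesis
    unfolding interlaces_def by (simp add: eltC eltD diff_le_mono)
qed

lemma interlacing_adj_pad:
  "interlacing_adj k A B \<Longrightarrow> interlacing_adj (j + k) (pad j A) (pad j B)"
  unfolding interlacing_adj_def
  by (metis interlaces_pad pad_ksets unpad_pad ksets_def mem_Collect_eq)

lemma interlacing_adj_unpad:
  "interlacing_adj (j + k) C D \<Longrightarrow>
     unpad j C = unpad j D \<or> interlacing_adj k (unpad j C) (unpad j D)"
  unfolding interlacing_adj_def using interlaces_unpad unpad_ksets by blast

lemma relpowp_image_le:
  assumes step: "\<And>x y. R x y \<Longrightarrow> h x = h y \<or> S (h x) (h y)"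
  shows "(R ^^ n) x y \<Longrightarrow> \<exists>n'\<le>n. (S ^^ n') (h x) (h y)"
proof (induction n arbitrary: y)
  case 0
  then show ?case by auto
next
  case (Suc n)
  then obtain z where "(R ^^ n) x z" "R z y"
    by (blast elim: relpowp_Suc_E)
  moreover from \<open>(R ^^ n) x z\<close> obtain n' where "n' \<le> n" "(S ^^ n') (h x) (h z)"
    using Suc.IH by blast
  ultimately show ?case
    using step[of z y] by (metis le_SucI Suc_le_mono relpowp_Suc_I)
qed

lemma dI_image_le:
  assumes "\<And>A B. interlacing_adj p A B \<Longrightarrow> h A = h B \<or> interlacing_adj q (h A) (h B)"
  shows "dI q (h A) (h B) \<le> dI p A B"
  unfolding dI_def
proof (rule INF_greatest)
  fix n assume "n \<in> {n. (interlacing_adj p ^^ n) A B}"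
  then obtain n' where "n' \<le> n" "(interlacing_adj q ^^ n') (h A) (h B)"
    using relpowp_image_le[of "interlacing_adj p" h "interlacing_adj q", OF assms] by blast
  then show "(INF n \<in> {n. (interlacing_adj q ^^ n) (h A) (h B)}. enat n) \<le> enat n"
    by (meson INF_lower2 enat_ord_simps(1) mem_Collect_eq)
qed

lemma dI_pad:
  assumes "A \<in> ksets k" "B \<in> ksets k"
  shows "dI (j + k) (pad j A) (pad j B) = dI k A B"
proof (rule antisym)
  show "dI (j + k) (pad j A) (pad j B) \<le> dI k A B"
    by (rule dI_image_le) (simp add: interlacing_adj_pad)
  have "dI k (unpad j (pad j A)) (unpad j (pad j B)) \<le> dI (j + k) (pad j A) (pad j B)"
    by (rule dI_image_le) (rule interlacing_adj_unpad)
  with assms show "dI k A B \<le> dI (j + k) (pad j A) (pad j B)"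
    by (simp add: ksets_def unpad_pad)
qed

theorem corollary5p2:
  fixes k m :: nat
  assumes "k < m"
  shows "\<exists>f :: nat set \<Rightarrow> nat set.
           (\<forall>A \<in> ksets k. f A \<in> ksets m) \<and>
           (\<forall>A \<in> ksets k. \<forall>B \<in> ksets k. dI m (f A) (f B) = dI k A B)"
proof -
  have m: "m = (m - k) + k" using assms by simp
  show ?thesis
    by (rule exI[of _ "pad (m - k)"]) (metis m pad_ksets dI_pad)
qed

end
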